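(* For every $t=0,1,\dots,T-2$ and every $z_m\in Z_\theta$ with $z_m\le I_t$, one has $H_t(z_m)\ge H_t(I_t)$.
   Context: Model. Fix an integer horizon $T\ge 2$, a discount factor $\alpha\in(0,1]$, and for $t=0,\dots,T-1$: unit ordering costs $c_t\in\mathbb R$, a salvage coefficient $c_T\in\mathbb R$, setup costs $K_t\ge 0$, functions $G_t:\mathbb R\to\mathbb R$, and independent nonnegative random demands $D_0,\dots,D_{T-1}$ with right-continuous distribution functions $F_t$ and finite means; all expectations appearing are assumed finite. Put $C_t(y)=(c_t-\alpha c_{t+1})y+G_t(y)+\alpha c_{t+1}E[D_t]$. Standing assumptions: (i) each $C_t$ is convex with $C_t(y)\to+\infty$ as $|y|\to\infty$; (ii) $K_t\ge \alpha K_{t+1}$ for $t=0,\dots,T-2$. Grid construction. Fix $\theta>0$, let $z_m=m\theta$ ($m\in\mathbb Z$), $Z_\theta=\{z_m:m\in\mathbb Z\}$, and $f_t(n)=F_t(z_{n+1})-F_t(z_n)$ for integers $n\ge -1$. Let $C^m_t=\min\{y: C_t(y)=\min_{x}C_t(x)\}$; with $n_0$ the integer such that $z_{n_0}<C^m_t\le z_{n_0+1}$, let $S^U_t=\min\{z_m\in Z_\theta: z_m\ge C^m_t,\ C_t(z_m)>C_t(z_{n_0})+K_t\}$. Let $s_{T-1}$ be a point with $s_{T-1}\le C^m_{T-1}$ and $C_{T-1}(s_{T-1})=C_{T-1}(C^m_{T-1})+K_{T-1}$, and $\bar I_{T-1}=s_{T-1}$. For $t=T-2,\dots,0$: $I_t=\max\{z_m\in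 Z_\theta: z_m<\min(\bar I_{t+1}-\theta,\,C^m_t)\}$, $\bar I_t=\max\{z_m\in Z_\theta: z_m\le I_t,\ C_t(z_m)>C_t(I_t)+K_t\}+\theta$. Set $H_{T-1}=C_{T-1}$, $S_{T-1}=C^m_{T-1}$. Whenever $H_t,S_t,s_t$ are defined, $V_t(y)=H_t(S_t)+K_t$ for $y<s_t$ and $V_t(y)=H_t(y)$ for $y\ge s_t$. For $t=T-2,\dots,0$: $H_t(y)=C_t(y)+\alpha\sum_{n=-1}^{\infty}V_{t+1}(y-z_n)f_t(n)$; $S_t=\max\{z_m\in Z_\theta: I_t\le z_m\le S^U_t,\ H_t(z_m)=\min\{H_t(z_n): z_n\in Z_\theta,\ I_t\le z_n\le S^U_t\}\}$; $s_t=S_t$ if $K_t=0$, else $s_t=\min\{z_m\in Z_\theta:\bar I_t\le z_m\le S_t,\ H_t(z_m)\le H_t(S_t)+K_t\}$. *)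

theory Defs
  imports "HOL-Probability.Probability"
begin

text \<open>Model data. Demand D_t is represented by its distribution (a probability measure
 on the reals); only its distribution function F_t and its mean E[D_t] enter the
 construction.\<close>

record invmodel =
  hor   :: nat
  alpha :: real
  cost  :: "nat \<Rightarrow> real"             (* c_t, t = 0..T (c_T salvage) *)
  Kst :: "nat \<Rightarrow> real"
  Gf    :: "nat \<Rightarrow> real \<Rightarrow> real"
  dem   :: "nat \<Rightarrow> real measure"
  theta :: real

definition Fd :: "invmodel \<Rightarrow> nat \<Rightarrow> real \<Rightarrow> real" where
  "Fd P t x = measure (dem P t) {..x}"

definition ED :: "invmodel \<Rightarrow> nat \<Rightarrow> real" where
  "ED P t = integral\<^sup>L (dem P t) (\<lambda>x. x)"

definition Cf :: "invmodel \<Rightarrow> nat \<Rightarrow> real \<Rightarrow> real" where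
  "Cf P t y = (cost P t - alpha P * cost P (Suc t)) * y + Gf P t y
              + alpha P * cost P (Suc t) * ED P t"

definition Cm :: "invmodel \<Rightarrow> nat \<Rightarrow> real" where
  "Cm P t = (LEAST y. \<forall>x. Cf P t y \<le> Cf P t x)"

definition zg :: "invmodel \<Rightarrow> int \<Rightarrow> real" where
  "zg P m = real_of_int m * theta P"

definition Zg :: "invmodel \<Rightarrow> real set" where
  "Zg P = range (zg P)"

definition fd :: "invmodel \<Rightarrow> nat \<Rightarrow> int \<Rightarrow> real" where
  "fd P t n = Fd P t (zg P (n + 1)) - Fd P t (zg P n)"

definition n0 :: "invmodel \<Rightarrow> nat \<Rightarrow> int" where
  "n0 P t = (THE n. zg P n < Cm P t \<and> Cm P t \<le> zg P (n + 1))"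

definition SU :: "invmodel \<Rightarrow> nat \<Rightarrow> real" where
  "SU P t = (LEAST x. x \<in> Zg P \<and> x \<ge> Cm P t \<and>
                      Cf P t x > Cf P t (zg P (n0 P t)) + Kst P t)"

definition sLast :: "invmodel \<Rightarrow> real" where
  "sLast P = (SOME s. s \<le> Cm P (hor P - 1) \<and>
        Cf P (hor P - 1) s = Cf P (hor P - 1) (Cm P (hor P - 1)) + Kst P (hor P - 1))"

definition Iof :: "invmodel \<Rightarrow> nat \<Rightarrow> real \<Rightarrow> real" where
  "Iof P t Ibnext = (GREATEST x. x \<in> Zg P \<and> x < min (Ibnext - theta P) (Cm P t))"

definition Ibof :: "invmodel \<Rightarrow> nat \<Rightarrow> real \<Rightarrow> real" where
  "Ibof P t I = (GREATEST x. x \<in> Zg P \<and> x \<le> I \<and> Cf P t x > Cf P t I + Kst P t) + theta P"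

text \<open>Backward recursion, indexed by k = T-1-t.\<close>
primrec Ibrec :: "invmodel \<Rightarrow> nat \<Rightarrow> real" where
  "Ibrec P 0 = sLast P"
| "Ibrec P (Suc k) = Ibof P (hor P - 2 - k) (Iof P (hor P - 2 - k) (Ibrec P k))"

definition Ibar :: "invmodel \<Rightarrow> nat \<Rightarrow> real" where
  "Ibar P t = Ibrec P (hor P - 1 - t)"

definition Ii :: "invmodel \<Rightarrow> nat \<Rightarrow> real" where
  "Ii P t = Iof P t (Ibar P (Suc t))"

definition Vof :: "real \<Rightarrow> (real \<Rightarrow> real) \<Rightarrow> real \<Rightarrow> real \<Rightarrow> real \<Rightarrow> real" where
  "Vof Kt Ht St st y = (if y < st then Ht St + Kt else Ht y)"

text \<open>The expectation sum over n = -1, 0, 1, ... (reindexed by k = n + 1).\<close>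
definition EV :: "invmodel \<Rightarrow> nat \<Rightarrow> (real \<Rightarrow> real) \<Rightarrow> real \<Rightarrow> real" where
  "EV P t V y = (\<Sum>k. V (y - zg P (int k - 1)) * fd P t (int k - 1))"

primrec HSs :: "invmodel \<Rightarrow> nat \<Rightarrow> (real \<Rightarrow> real) \<times> real \<times> real" where
  "HSs P 0 = (Cf P (hor P - 1), Cm P (hor P - 1), sLast P)"
| "HSs P (Suc k) =
     (let t = hor P - 2 - k;
          (H', S', s') = HSs P k;
          V = Vof (Kst P (Suc t)) H' S' s';
          H = (\<lambda>y. Cf P t y + alpha P * EV P t V y);
          I = Ii P t;
          U = SU P t;
          grid = {x \<in> Zg P. I \<le> x \<and> x \<le> U};
          S = (GREATEST x. x \<in> grid \<and> H x = Min (H ` grid));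
          s = (if Kst P t = 0 then S
               else (LEAST x. x \<in> Zg P \<and> Ibar P t \<le> x \<and> x \<le> S \<and> H x \<le> H S + Kst P t))
      in (H, S, s))"

definition Hf :: "invmodel \<Rightarrow> nat \<Rightarrow> real \<Rightarrow> real" where
  "Hf P t = fst (HSs P (hor P - 1 - t))"

definition Sf :: "invmodel \<Rightarrow> nat \<Rightarrow> real" where
  "Sf P t = fst (snd (HSs P (hor P - 1 - t)))"

definition sf :: "invmodel \<Rightarrow> nat \<Rightarrow> real" where
  "sf P t = snd (snd (HSs P (hor P - 1 - t)))"

definition Vf :: "invmodel \<Rightarrow> nat \<Rightarrow> real \<Rightarrow> real" where
  "Vf P t = Vof (Kst P t) (Hf P t) (Sf P t) (sf P t)"

end

theory Submission
  imports Defs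
begin

text \<open>For \<open>y \<le> I\<^sub>t\<close> every demand realisation \<open>z\<^sub>n \<ge> -\<theta>\<close> gives
  \<open>y - z\<^sub>n < Ibar\<^sub>t\<^sub>+\<^sub>1 \<le> s\<^sub>t\<^sub>+\<^sub>1\<close>, where \<open>V\<^sub>t\<^sub>+\<^sub>1\<close> is the constant \<open>H\<^sub>t\<^sub>+\<^sub>1(S\<^sub>t\<^sub>+\<^sub>1) + K\<^sub>t\<^sub>+\<^sub>1\<close>.
  Hence the expectation part of \<open>H\<^sub>t\<close> takes the same value at every grid point
  \<open>z\<^sub>m \<le> I\<^sub>t\<close>, and the claim reduces to \<open>C\<^sub>t(z\<^sub>m) \<ge> C\<^sub>t(I\<^sub>t)\<close>. This holds because
  \<open>I\<^sub>t < C\<^sub>t\<^sup>m\<close> and the convex function \<open>C\<^sub>t\<close> is nonincreasing to the left of its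
  minimiser. Both values of \<open>H\<^sub>t\<close> contain the same series.\<close>

lemma coercive_bound:
  fixes f :: "real \<Rightarrow> real"
  assumes "filterlim f at_top at_infinity"
  shows "\<exists>R. \<forall>x. R \<le> \<bar>x\<bar> \<longrightarrow> B \<le> f x"
  using assms unfolding filterlim_at_top eventually_at_infinity by (auto simp: real_norm_def)

lemma compact_sublevel_coercive:
  fixes f :: "real \<Rightarrow> real"
  assumes cont: "continuous_on UNIV f" and coer: "filterlim f at_top at_infinity"
  shows "compact {x. f x \<le> c}"
proof -
  obtain R where R: "\<forall>x. R \<le> \<bar>x\<bar> \<longrightarrow> c + 1 \<le> f x"
    using coercive_bound[OF coer] by blast
  have "{x. f x \<le> c} \<subseteq> cball 0 \<bar>R\<bar>"
  proof
    fix x assume "x \<in> {x. f x \<le> c}"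
    then have "\<not> R \<le> \<bar>x\<bar>" using R by force
    then show "x \<in> cball 0 \<bar>R\<bar>" by (simp add: dist_real_def)
  qed
  moreover have "closed {x. f x \<le> c}"
    using cont by (intro closed_Collect_le) (auto intro: continuous_intros)
  ultimately show ?thesis
    using bounded_cball bounded_subset compact_eq_bounded_closed by blast
qed

lemma LEAST_argmin_coercive:
  fixes f :: "real \<Rightarrow> real"
  assumes cont: "continuous_on UNIV f" and coer: "filterlim f at_top at_infinity"
  shows "f (LEAST y. \<forall>x. f y \<le> f x) \<le> f x"
proof -
  obtain m where "m \<in> {x. f x \<le> f 0}" and m0: "\<forall>y\<in>{x. f x \<le> f 0}. f m \<le> f y"
    using continuous_attains_inf[OF compact_sublevel_coercive[OF cont coer], of "f 0" f]
      continuous_on_subset[OF cont] by blast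
  then have m: "\<forall>y. f m \<le> f y"
    by (metis linear mem_Collect_eq order_trans)
  obtain s where s: "s \<in> {x. f x \<le> f m}" "\<forall>y\<in>{x. f x \<le> f m}. s \<le> y"
    using compact_attains_inf[OF compact_sublevel_coercive[OF cont coer], of "f m"] by blast
  have "(LEAST y. \<forall>x. f y \<le> f x) = s"
    using s m by (intro Least_equality) (auto intro: order_trans)
  then show ?thesis
    using s m by (auto intro: order_trans)
qed

lemma convex_antimono_left_of_argmin:
  fixes f :: "real \<Rightarrow> real"
  assumes "convex_on UNIV f" and "\<forall>x. f c \<le> f x" and "z \<le> y" "y \<le> c"
  shows "f y \<le> f z"
proof -
  have "f c \<le> f z" using assms(2) by simp
  then show ?thesis
    using convex_on_le_max[where x = z and y = c and a = y, OF convex_on_subset[OF assms(1)]]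
      assms(3,4) by (simp add: max_def)
qed

lemma zg_less_iff: "theta P > 0 \<Longrightarrow> zg P m < zg P n \<longleftrightarrow> m < n"
  by (simp add: zg_def)

lemma Zg_below: "theta P > 0 \<Longrightarrow> \<exists>x\<in>Zg P. x < b"
proof -
  assume th: "theta P > 0"
  have "real_of_int \<lfloor>b / theta P\<rfloor> * theta P \<le> b"
    using th by (simp add: pos_le_divide_eq[symmetric])
  then have "zg P (\<lfloor>b / theta P\<rfloor> - 1) < b"
    using th by (simp add: zg_def algebra_simps)
  then show ?thesis unfolding Zg_def by blast
qed

lemma Zg_above: "theta P > 0 \<Longrightarrow> \<exists>x\<in>Zg P. b < x"
proof -
  assume th: "theta P > 0"
  have "b \<le> real_of_int \<lceil>b / theta P\<rceil> * theta P"
    using th by (simp add: pos_divide_le_eq[symmetric])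
  then have "b < zg P (\<lceil>b / theta P\<rceil> + 1)"
    using th by (simp add: zg_def algebra_simps)
  then show ?thesis unfolding Zg_def by blast
qed

lemma Zg_less_imp_le_diff:
  assumes th: "theta P > 0" and "x \<in> Zg P" "y \<in> Zg P" "x < y"
  shows "x \<le> y - theta P"
proof -
  obtain m n where mn: "x = zg P m" "y = zg P n"
    using assms unfolding Zg_def by auto
  with assms have "real_of_int m * theta P \<le> real_of_int (n - 1) * theta P"
    by (intro mult_right_mono) (auto simp: zg_less_iff)
  then show ?thesis using mn by (simp add: zg_def algebra_simps)
qed

lemma finite_Zg_interval:
  assumes th: "theta P > 0"
  shows "finite {x \<in> Zg P. a \<le> x \<and> x \<le> b}"
proof -
  have "{x \<in> Zg P. a \<le> x \<and> x \<le> b} \<subseteq> zg P ` {\<lfloor>a / theta P\<rfloor>..\<lceil>b / theta P\<rceil>}"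
  proof
    fix x assume x: "x \<in> {x \<in> Zg P. a \<le> x \<and> x \<le> b}"
    then obtain m where m: "x = zg P m" unfolding Zg_def by auto
    with x th have "a / theta P \<le> real_of_int m" "real_of_int m \<le> b / theta P"
      by (auto simp: zg_def pos_divide_le_eq pos_le_divide_eq)
    then show "x \<in> zg P ` {\<lfloor>a / theta P\<rfloor>..\<lceil>b / theta P\<rceil>}"
      using m by (auto simp: floor_le_iff le_ceiling_iff)
  qed
  then show ?thesis by (rule finite_subset) simp
qed

lemma GreatestI_Zg:
  assumes th: "theta P > 0" and "x0 \<in> Zg P" "Q x0"
    and bound: "\<And>x. x \<in> Zg P \<Longrightarrow> Q x \<Longrightarrow> x \<le> b"
  shows "(GREATEST x. x \<in> Zg P \<and> Q x) \<in> Zg P \<and> Q (GREATEST x. x \<in> Zg P \<and> Q x)"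
proof -
  define A where "A = {x \<in> Zg P. Q x \<and> x0 \<le> x}"
  have "A \<subseteq> {x \<in> Zg P. x0 \<le> x \<and> x \<le> b}" using bound by (auto simp: A_def)
  then have fin: "finite A" using finite_Zg_interval[OF th] by (rule finite_subset)
  have x0: "x0 \<in> A" using assms by (simp add: A_def)
  have above: "y \<le> Max A" if "y \<in> Zg P" "Q y" for y
  proof (cases "x0 \<le> y")
    case True then show ?thesis using that fin by (simp add: A_def)
  next
    case False then show ?thesis using Max_ge[OF fin x0] by linarith
  qed
  from Max_in[OF fin] x0 have "Max A \<in> Zg P \<and> Q (Max A)" by (auto simp: A_def)
  then show ?thesis using above by (rule GreatestI2_order) auto
qed

lemma LeastI_Zg:
  assumes th: "theta P > 0" and "x0 \<in> Zg P" "Q x0"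
    and bound: "\<And>x. x \<in> Zg P \<Longrightarrow> Q x \<Longrightarrow> b \<le> x"
  shows "(LEAST x. x \<in> Zg P \<and> Q x) \<in> Zg P \<and> Q (LEAST x. x \<in> Zg P \<and> Q x)"
proof -
  define A where "A = {x \<in> Zg P. Q x \<and> x \<le> x0}"
  have "A \<subseteq> {x \<in> Zg P. b \<le> x \<and> x \<le> x0}" using bound by (auto simp: A_def)
  then have fin: "finite A" using finite_Zg_interval[OF th] by (rule finite_subset)
  have x0: "x0 \<in> A" using assms by (simp add: A_def)
  have below: "Min A \<le> y" if "y \<in> Zg P" "Q y" for y
  proof (cases "y \<le> x0")
    case True then show ?thesis using that fin by (simp add: A_def)
  next
    case False then show ?thesis using Min_le[OF fin x0] by linarith
  qed
  from Min_in[OF fin] x0 have "Min A \<in> Zg P \<and> Q (Min A)" by (auto simp: A_def)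
  then show ?thesis using below by (rule LeastI2_order) auto
qed

lemma Ibar_step:
  assumes "u + 2 \<le> hor P"
  shows "Ibar P u = Ibof P u (Ii P u)"
proof -
  have "hor P - 1 - u = Suc (hor P - 2 - u)" "hor P - 2 - (hor P - 2 - u) = u"
    "hor P - 1 - Suc u = hor P - 2 - u"
    using assms by auto
  then show ?thesis unfolding Ibar_def Ii_def by simp
qed

lemma HSs_step:
  assumes "t + 2 \<le> hor P"
  shows "HSs P (hor P - 1 - t) =
   (let H = (\<lambda>y. Cf P t y + alpha P * EV P t (Vf P (Suc t)) y);
        G = {x \<in> Zg P. Ii P t \<le> x \<and> x \<le> SU P t};
        S = (GREATEST x. x \<in> G \<and> H x = Min (H ` G))
    in (H, S, if Kst P t = 0 then S
              else (LEAST x. x \<in> Zg P \<and> Ibar P t \<le> x \<and> x \<le> S \<and> H x \<le> H S + Kst P t)))"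
proof -
  define k where "k = hor P - 2 - t"
  have k: "hor P - 1 - t = Suc k" "hor P - 2 - k = t" "hor P - 1 - Suc t = k"
    using assms by (auto simp: k_def)
  obtain H' S' s' where HSk: "HSs P k = (H', S', s')" by (cases "HSs P k") auto
  have "Vf P (Suc t) = Vof (Kst P (Suc t)) H' S' s'"
    unfolding Vf_def Hf_def Sf_def sf_def k(3) HSk by simp
  then show ?thesis unfolding k(1) HSs.simps k(2) by (simp add: HSk Let_def)
qed

lemma Hf_step:
  "t + 2 \<le> hor P \<Longrightarrow> Hf P t = (\<lambda>y. Cf P t y + alpha P * EV P t (Vf P (Suc t)) y)"
  using HSs_step by (simp add: Hf_def Let_def)

lemma Ii_bounds:
  assumes th: "theta P > 0"
  shows "Ii P t \<in> Zg P" "Ii P t < Ibar P (Suc t) - theta P" "Ii P t < Cm P t"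
proof -
  let ?b = "min (Ibar P (Suc t) - theta P) (Cm P t)"
  obtain x0 where "x0 \<in> Zg P" "x0 < ?b" using Zg_below[OF th] by blast
  from GreatestI_Zg[where Q = "\<lambda>x. x < ?b" and b = ?b, OF th this]
  show "Ii P t \<in> Zg P" "Ii P t < Ibar P (Suc t) - theta P" "Ii P t < Cm P t"
    unfolding Ii_def Iof_def by auto
qed

lemma Ibar_le_Ii:
  assumes u: "u + 2 \<le> hor P" and th: "theta P > 0" and K: "Kst P u \<ge> 0"
    and coer: "filterlim (Cf P u) at_top at_infinity"
  shows "Ibar P u \<le> Ii P u"
proof -
  let ?I = "Ii P u" and ?C = "Cf P u"
  let ?Q = "\<lambda>x. x \<le> ?I \<and> ?C ?I + Kst P u < ?C x"
  obtain R where R: "\<forall>x. R \<le> \<bar>x\<bar> \<longrightarrow> ?C ?I + Kst P u + 1 \<le> ?C x"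
    using coercive_bound[OF coer] by blast
  obtain x0 where x0: "x0 \<in> Zg P" "x0 < min ?I (- \<bar>R\<bar>)" using Zg_below[OF th] by blast
  then have "R \<le> \<bar>x0\<bar>" by linarith
  then have "?C ?I + Kst P u + 1 \<le> ?C x0" using R by blast
  then have "?Q x0" using x0 by simp
  note g = GreatestI_Zg[where Q = ?Q and b = ?I, OF th x0(1) this]
  have "(GREATEST x. x \<in> Zg P \<and> ?Q x) \<noteq> ?I"
    using g K by auto
  then have "(GREATEST x. x \<in> Zg P \<and> ?Q x) \<le> ?I - theta P"
    using g Zg_less_imp_le_diff[OF th _ Ii_bounds(1)[OF th]] by force
  then show ?thesis unfolding Ibar_step[OF u] Ibof_def by simp
qed

lemma Cm_le_SU:
  assumes th: "theta P > 0" and coer: "filterlim (Cf P t) at_top at_infinity"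
  shows "Cm P t \<le> SU P t"
proof -
  let ?c = "Cf P t (zg P (n0 P t)) + Kst P t"
  let ?Q = "\<lambda>x. Cm P t \<le> x \<and> ?c < Cf P t x"
  obtain R where R: "\<forall>x. R \<le> \<bar>x\<bar> \<longrightarrow> ?c + 1 \<le> Cf P t x"
    using coercive_bound[OF coer] by blast
  obtain x0 where x0: "x0 \<in> Zg P" "max (Cm P t) \<bar>R\<bar> < x0" using Zg_above[OF th] by blast
  then have "R \<le> \<bar>x0\<bar>" by linarith
  then have "?c + 1 \<le> Cf P t x0" using R by blast
  then have "?Q x0" using x0 by simp
  from LeastI_Zg[where Q = ?Q, OF th x0(1) this] show ?thesis
    unfolding SU_def by blast
qed

text \<open>\<open>s\<^sub>t\<close> is searched in \<open>[Ibar\<^sub>t, S\<^sub>t]\<close>, which contains \<open>S\<^sub>t\<close> because \<open>Ibar\<^sub>t \<le> I\<^sub>t \<le> S\<^sub>t\<close>.\<close>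

lemma Ibar_le_sf:
  assumes u: "u < hor P" and th: "theta P > 0" and K: "Kst P u \<ge> 0"
    and coer: "filterlim (Cf P u) at_top at_infinity"
  shows "Ibar P u \<le> sf P u"
proof (cases "u + 2 \<le> hor P")
  case False
  then have "hor P - 1 - u = 0" using u by simp
  then show ?thesis unfolding Ibar_def sf_def by simp
next
  case u2: True
  define H where "H = (\<lambda>y. Cf P u y + alpha P * EV P u (Vf P (Suc u)) y)"
  define G where "G = {x \<in> Zg P. Ii P u \<le> x \<and> x \<le> SU P u}"
  define S where "S = (GREATEST x. x \<in> G \<and> H x = Min (H ` G))"
  have sf: "sf P u = (if Kst P u = 0 then S
              else (LEAST x. x \<in> Zg P \<and> Ibar P u \<le> x \<and> x \<le> S \<and> H x \<le> H S + Kst P u))"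
    unfolding sf_def HSs_step[OF u2] Let_def H_def G_def S_def by simp
  have "Ii P u \<le> SU P u"
    using Ii_bounds(3)[OF th, of u] Cm_le_SU[OF th coer] by linarith
  then have "Ii P u \<in> G"
    using Ii_bounds(1)[OF th] by (simp add: G_def)
  moreover have "finite G" unfolding G_def using finite_Zg_interval[OF th] .
  ultimately have "Min (H ` G) \<in> H ` G" by (intro Min_in) auto
  then obtain a where "a \<in> G" "H a = Min (H ` G)" by auto
  then have "S = Max {x \<in> G. H x = Min (H ` G)}" "{x \<in> G. H x = Min (H ` G)} \<noteq> {}"
    unfolding S_def using \<open>finite G\<close> by (auto intro: Greatest_Max)
  then have "S \<in> G"
    using Max_in[of "{x \<in> G. H x = Min (H ` G)}"] \<open>finite G\<close> by auto
  then have S: "S \<in> Zg P" "Ibar P u \<le> S"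
    using Ibar_le_Ii[OF u2 th K coer] by (auto simp: G_def)
  show ?thesis
  proof (cases "Kst P u = 0")
    case True
    then show ?thesis using sf S by simp
  next
    case False
    from LeastI_Zg[where Q = "\<lambda>x. Ibar P u \<le> x \<and> x \<le> S \<and> H x \<le> H S + Kst P u",
        OF th S(1)] S K
    show ?thesis using sf False by auto
  qed
qed

text \<open>Demand shifts \<open>z\<^sub>n\<close> with \<open>n \<ge> -1\<close> are at least \<open>-\<theta>\<close>, so \<open>y - z\<^sub>n < b\<close>.\<close>

lemma EV_const_below:
  assumes th: "theta P > 0" and V: "\<And>x. x < b \<Longrightarrow> V x = c" and y: "y < b - theta P"
  shows "EV P t V y = (\<Sum>k. c * fd P t (int k - 1))"
proof -
  have "V (y - zg P (int k - 1)) = c" for k :: nat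
  proof -
    have "- theta P \<le> zg P (int k - 1)"
      using th by (simp add: zg_def algebra_simps)
    then show ?thesis using y by (intro V) linarith
  qed
  then show ?thesis unfolding EV_def by simp
qed

theorem lemma3p1:
  fixes P :: invmodel
  assumes T2: "hor P \<ge> 2"
    and alpha: "0 < alpha P" "alpha P \<le> 1"
    and theta: "theta P > 0"
    and Kpos: "\<And>t. t < hor P \<Longrightarrow> Kst P t \<ge> 0"
    and Kdec: "\<And>t. t + 2 \<le> hor P \<Longrightarrow> Kst P t \<ge> alpha P * Kst P (Suc t)"
    and dprob: "\<And>t. t < hor P \<Longrightarrow> prob_space (dem P t)"
    and dborel: "\<And>t. t < hor P \<Longrightarrow> sets (dem P t) = sets borel"
    and dnonneg: "\<And>t. t < hor P \<Longrightarrow> AE x in dem P t. x \<ge> 0"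
    and dmean: "\<And>t. t < hor P \<Longrightarrow> integrable (dem P t) (\<lambda>x. x)"
    and Cconv: "\<And>t. t < hor P \<Longrightarrow> convex_on UNIV (Cf P t)"
    and Ccoer: "\<And>t. t < hor P \<Longrightarrow> filterlim (Cf P t) at_top at_infinity"
    and finexp: "\<And>t y. t + 2 \<le> hor P \<Longrightarrow>
        summable (\<lambda>k. \<bar>Vf P (Suc t) (y - zg P (int k - 1)) * fd P t (int k - 1)\<bar>)"
  shows "\<forall>t. t + 2 \<le> hor P \<longrightarrow>
           (\<forall>m. zg P m \<le> Ii P t \<longrightarrow> Hf P t (zg P m) \<ge> Hf P t (Ii P t))"
proof (intro allI impI)
  fix t m assume t: "t + 2 \<le> hor P" and zm: "zg P m \<le> Ii P t"
  have "Ibar P (Suc t) \<le> sf P (Suc t)"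
    using t by (intro Ibar_le_sf theta Kpos Ccoer) auto
  then have "Ii P t < sf P (Suc t) - theta P"
    using Ii_bounds(2)[OF theta, of t] by linarith
  then have EV: "EV P t (Vf P (Suc t)) y = (\<Sum>k. (Hf P (Suc t) (Sf P (Suc t)) + Kst P (Suc t))
      * fd P t (int k - 1))" if "y \<le> Ii P t" for y
    using that by (intro EV_const_below[OF theta]) (auto simp: Vf_def Vof_def)
  have Cm: "\<forall>x. Cf P t (Cm P t) \<le> Cf P t x"
    using LEAST_argmin_coercive[OF convex_on_continuous[OF open_UNIV Cconv] Ccoer] t
    unfolding Cm_def by simp
  have "Cf P t (Ii P t) \<le> Cf P t (zg P m)"
    using convex_antimono_left_of_argmin[OF Cconv Cm zm] Ii_bounds(3)[OF theta, of t] t by simp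
  then show "Hf P t (zg P m) \<ge> Hf P t (Ii P t)"
    unfolding Hf_step[OF t] using EV[OF zm] EV[of "Ii P t"] by simp
qed

end
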